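(* Suppose problem (CP0-group) has a unique solution $v^*\in\mathbb{C}^M$. Suppose further that $x^*:=\nu^{-1}(v^* )\neq0$ and that $y_i=|q_i^Hx^*|^2$ for $i=1,\dots,N$. Then the solution set of problem (CP0) is exactly $T(x^* )$.
   Context: Complex setting. Let $n,N\ge1$ and $M=n(n+1)/2$. Components of vectors in $\mathbb{C}^M$ are indexed by unordered pairs: for $1\le i,j\le n$ the symmetric index $ij$ ($=ji$) is $\sum_{k=1}^{\min\{i,j\}-1}(n-k+1)+|j-i|+1$, a bijection onto $\{1,\dots,M\}$. The complex Veronese map $\nu:\mathbb{C}^n\to\mathbb{C}^M$ is $(\nu(x))_{ij}=x_i\overline{x_j}$ for $i\le j$. For $j=1,\dots,n$, $W_j$ is the $n\times M$ binary matrix with $(W_j)_{k,l}=1$ iff $l$ is the index $jk$, so $W_jv=(v_{j1},\dots,v_{jn})^T$. $\|x\|_0$ is the number of nonzero entries of $x$. For vectors $u_1,\dots,u_n$, $\|\{u_j\}_{j=1}^n\|_0$ is the number of $j$ with $u_j\ne0$. For $x\in\mathbb{C}^n$, $T(x)=\{zx: z\in\mathbb{C},\ |z|=1\}$. Data: $q_1,\dots,q_N\in\mathbb{C}^n$ and $y\in\mathbb{R}^N$. Define $a_i\in\mathbb{C}^M$ by $(a_i)_{jk}=2q_{ij}\overline{q_{ik}}$ for $j<k$ and $(a_i)_{jj}=|q_{ij}|^2$, i.e. $a_i$ is $\nu(q_i)$ with off-diagonal entries doubled. Let $A=[a_1,\dots,a_N]^H\in\mathbb{C}^{N\times M}$,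 so the $i$-th row of $A$ is $a_i^H$. Inverse map $\nu^{-1}:\mathbb{C}^M\to\mathbb{C}^n$. Let $i$ be the smallest $j$ with $\mathrm{Re}(v_{jj})>0$ and $\mathrm{Im}(v_{jj})=0$ ($i=0$ if none exists). If $i>0$ and $|v_{ji}|^2/v_{ii}=v_{jj}$ for all $j=1,\dots,n$, then $\nu^{-1}(v)=\frac{1}{\sqrt{v_{ii}}}(\overline{v_{1i}},\dots,\overline{v_{ni}})^T$, with $\sqrt{v_{ii}}>0$. Otherwise $\nu^{-1}(v)=0$. (CP0): $\min_{x\in\mathbb{C}^n}\|x\|_0$ subject to $y_i=|q_i^Hx|^2$ for $i=1,\dots,N$. (CP0-group): $\min_{v\in\mathbb{C}^M}\|\{W_jv\}_{j=1}^n\|_0$ subject to $y=\mathrm{Re}(Av)$ and $v_{jj}$ real and nonnegative for $j=1,\dots,n$. *)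

theory Defs
  imports Complex_Main
begin

(* Vectors in C^d are functions nat => complex indexed by 1..d, zero outside. *)
definition cvec :: "nat \<Rightarrow> (nat \<Rightarrow> complex) set" where
  "cvec d = {x. \<forall>k. k \<notin> {1..d} \<longrightarrow> x k = 0}"

definition Mdim :: "nat \<Rightarrow> nat" where
  "Mdim n = n * (n + 1) div 2"

definition sym_idx :: "nat \<Rightarrow> nat \<Rightarrow> nat \<Rightarrow> nat" where
  "sym_idx n i j = (\<Sum>k=1..min i j - 1. n - k + 1) + (max i j - min i j) + 1"

(* inverse of the bijection {(i,j). 1<=i<=j<=n} -> {1..M} *)
definition sym_pair :: "nat \<Rightarrow> nat \<Rightarrow> nat \<times> nat" where
  "sym_pair n l = (SOME p. 1 \<le> fst p \<and> fst p \<le> snd p \<and> snd p \<le> n \<and> sym_idx n (fst p) (snd p) = l)"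

definition vget :: "nat \<Rightarrow> (nat \<Rightarrow> complex) \<Rightarrow> nat \<Rightarrow> nat \<Rightarrow> complex" where
  "vget n v i j = v (sym_idx n i j)"

definition veronese :: "nat \<Rightarrow> (nat \<Rightarrow> complex) \<Rightarrow> (nat \<Rightarrow> complex)" where
  "veronese n x = (\<lambda>l. if l \<in> {1..Mdim n}
      then (case sym_pair n l of (i, j) \<Rightarrow> x i * cnj (x j)) else 0)"

definition Wsel :: "nat \<Rightarrow> nat \<Rightarrow> (nat \<Rightarrow> complex) \<Rightarrow> (nat \<Rightarrow> complex)" where
  "Wsel n j v = (\<lambda>k. if k \<in> {1..n} then vget n v j k else 0)"

definition l0 :: "nat \<Rightarrow> (nat \<Rightarrow> complex) \<Rightarrow> nat" where
  "l0 n x = card {j \<in> {1..n}. x j \<noteq> 0}"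

definition group_l0 :: "nat \<Rightarrow> (nat \<Rightarrow> complex) \<Rightarrow> nat" where
  "group_l0 n v = card {j \<in> {1..n}. Wsel n j v \<noteq> (\<lambda>_. 0)}"

definition Tset :: "(nat \<Rightarrow> complex) \<Rightarrow> (nat \<Rightarrow> complex) set" where
  "Tset x = {(\<lambda>k. z * x k) | z. cmod z = 1}"

(* q i j = q_{ij}: j-th entry of q_i.  a_i as defined in the context *)
definition avec :: "nat \<Rightarrow> (nat \<Rightarrow> nat \<Rightarrow> complex) \<Rightarrow> nat \<Rightarrow> (nat \<Rightarrow> complex)" where
  "avec n q i = (\<lambda>l. if l \<in> {1..Mdim n}
      then (case sym_pair n l of (j, k) \<Rightarrow>
              if j < k then 2 * q i j * cnj (q i k) else complex_of_real ((cmod (q i j))\<^sup>2))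
      else 0)"

definition Amul :: "nat \<Rightarrow> (nat \<Rightarrow> nat \<Rightarrow> complex) \<Rightarrow> (nat \<Rightarrow> complex) \<Rightarrow> nat \<Rightarrow> complex" where
  "Amul n q v i = (\<Sum>l=1..Mdim n. cnj (avec n q i l) * v l)"

definition inv_veronese :: "nat \<Rightarrow> (nat \<Rightarrow> complex) \<Rightarrow> (nat \<Rightarrow> complex)" where
  "inv_veronese n v =
    (if \<exists>j\<in>{1..n}. Re (vget n v j j) > 0 \<and> Im (vget n v j j) = 0 then
       (let i = (LEAST j. 1 \<le> j \<and> j \<le> n \<and> Re (vget n v j j) > 0 \<and> Im (vget n v j j) = 0) in
        if \<forall>j\<in>{1..n}. complex_of_real ((cmod (vget n v j i))\<^sup>2 / Re (vget n v i i)) = vget n v j j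
        then (\<lambda>j. if j \<in> {1..n} then cnj (vget n v j i) / complex_of_real (sqrt (Re (vget n v i i))) else 0)
        else (\<lambda>_. 0))
     else (\<lambda>_. 0))"

definition CP0_feasible :: "nat \<Rightarrow> nat \<Rightarrow> (nat \<Rightarrow> nat \<Rightarrow> complex) \<Rightarrow> (nat \<Rightarrow> real) \<Rightarrow> (nat \<Rightarrow> complex) \<Rightarrow> bool" where
  "CP0_feasible n N q y x \<longleftrightarrow> x \<in> cvec n \<and>
     (\<forall>i\<in>{1..N}. y i = (cmod (\<Sum>j=1..n. cnj (q i j) * x j))\<^sup>2)"

definition CP0_solset :: "nat \<Rightarrow> nat \<Rightarrow> (nat \<Rightarrow> nat \<Rightarrow> complex) \<Rightarrow> (nat \<Rightarrow> real) \<Rightarrow> (nat \<Rightarrow> complex) set" where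
  "CP0_solset n N q y = {x. CP0_feasible n N q y x \<and>
     (\<forall>x'. CP0_feasible n N q y x' \<longrightarrow> l0 n x \<le> l0 n x')}"

definition CP0g_feasible :: "nat \<Rightarrow> nat \<Rightarrow> (nat \<Rightarrow> nat \<Rightarrow> complex) \<Rightarrow> (nat \<Rightarrow> real) \<Rightarrow> (nat \<Rightarrow> complex) \<Rightarrow> bool" where
  "CP0g_feasible n N q y v \<longleftrightarrow> v \<in> cvec (Mdim n) \<and>
     (\<forall>i\<in>{1..N}. y i = Re (Amul n q v i)) \<and>
     (\<forall>j\<in>{1..n}. Im (vget n v j j) = 0 \<and> Re (vget n v j j) \<ge> 0)"

definition CP0g_solset :: "nat \<Rightarrow> nat \<Rightarrow> (nat \<Rightarrow> nat \<Rightarrow> complex) \<Rightarrow> (nat \<Rightarrow> real) \<Rightarrow> (nat \<Rightarrow> complex) set" where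
  "CP0g_solset n N q y = {v. CP0g_feasible n N q y v \<and>
     (\<forall>v'. CP0g_feasible n N q y v' \<longrightarrow> group_l0 n v \<le> group_l0 n v')}"

end

theory Submission
  imports Defs
begin

text \<open>The Veronese map turns (CP0) into (CP0-group): a feasible x of (CP0) gives a feasible
  \<open>\<nu>(x)\<close> of (CP0-group) with the same sparsity, because \<open>Re (a\<^sub>i\<^sup>H \<nu>(x)) = |q\<^sub>i\<^sup>H x|\<^sup>2\<close> and the
  group \<open>W\<^sub>j \<nu>(x)\<close> vanishes exactly when \<open>x\<^sub>j = 0\<close>. Conversely \<open>x\<^sup>* = \<nu>\<^sup>-\<^sup>1(v\<^sup>*)\<close> is feasible by
  hypothesis and no less sparse than \<open>v\<^sup>*\<close>. Hence the optimal values agree, the Veronese image of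
  every solution of (CP0) is optimal for (CP0-group) and so equals \<open>v\<^sup>*\<close>, and \<open>\<nu>(x) = \<nu>(x\<^sup>*)\<close>
  with \<open>x\<^sup>* \<noteq> 0\<close> forces \<open>x \<in> T(x\<^sup>*)\<close>. Rotations by unit scalars preserve feasibility and sparsity,
  which gives the reverse inclusion.\<close>

definition sym_offset :: "nat \<Rightarrow> nat \<Rightarrow> nat" where
  "sym_offset n i = (\<Sum>k=1..i - 1. n - k + 1)"

definition sym_pairs :: "nat \<Rightarrow> (nat \<times> nat) set" where
  "sym_pairs n = {(i, j). 1 \<le> i \<and> i \<le> j \<and> j \<le> n}"

lemma sym_idx_eq_offset: "sym_idx n i j = sym_offset n (min i j) + (max i j - min i j) + 1"
  by (simp add: sym_idx_def sym_offset_def)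

lemma sym_idx_commute: "sym_idx n j k = sym_idx n (min j k) (max j k)"
  by (simp add: sym_idx_def)

lemma sym_offset_Suc: "i \<ge> 1 \<Longrightarrow> sym_offset n (Suc i) = sym_offset n i + (n - i + 1)"
  by (cases i) (simp_all add: sym_offset_def)

lemma sym_offset_mono: "a \<le> b \<Longrightarrow> sym_offset n a \<le> sym_offset n b"
  unfolding sym_offset_def by (rule sum_mono2) auto

lemma sym_offset_last: "sym_offset n (Suc n) = Mdim n"
proof -
  have "sym_offset n (Suc n) = (\<Sum>k=1..n. n - k + 1)" by (simp add: sym_offset_def)
  also have "\<dots> = (\<Sum>k=1..n. n - (n + 1 - k) + 1)"
    using sum.atLeastAtMost_rev[of "\<lambda>k. n - k + 1" 1 n] by (simp add: add.commute)
  also have "\<dots> = (\<Sum>k=1..n. k)" by (rule sum.cong) auto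
  also have "\<dots> = (\<Sum>k=0..n. k)" by (simp add: sum.atLeast_Suc_atMost)
  also have "\<dots> = Mdim n" using gauss_sum_nat[of n] by (simp add: Mdim_def)
  finally show ?thesis .
qed

lemma sym_pairs_eq_Sigma: "sym_pairs n = Sigma {1..n} (\<lambda>i. {i..n})"
  by (auto simp: sym_pairs_def)

lemma finite_sym_pairs: "finite (sym_pairs n)"
  by (simp add: sym_pairs_eq_Sigma)

lemma card_sym_pairs: "card (sym_pairs n) = Mdim n"
proof (induction n)
  case 0
  have "sym_pairs 0 = {}" by (auto simp: sym_pairs_def)
  then show ?case by (simp add: Mdim_def)
next
  case (Suc n)
  have split: "sym_pairs (Suc n) = sym_pairs n \<union> (\<lambda>i. (i, Suc n)) ` {1..Suc n}"
    by (auto simp: sym_pairs_def)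
  have "card (sym_pairs (Suc n)) = card (sym_pairs n) + card ((\<lambda>i. (i, Suc n)) ` {1..Suc n})"
    unfolding split by (rule card_Un_disjoint) (auto simp: finite_sym_pairs, auto simp: sym_pairs_def)
  also have "card ((\<lambda>i. (i, Suc n)) ` {1..Suc n}) = Suc n"
    by (subst card_image) (auto simp: inj_on_def)
  finally show ?case using Suc by (simp add: Mdim_def)
qed

lemma sym_idx_le_offset: "(i, j) \<in> sym_pairs n \<Longrightarrow> sym_idx n i j \<le> sym_offset n (Suc i)"
  by (auto simp: sym_idx_eq_offset sym_pairs_def sym_offset_Suc)

lemma sym_idx_in_range: assumes "(i, j) \<in> sym_pairs n" shows "sym_idx n i j \<in> {1..Mdim n}"
proof -
  have "sym_idx n i j \<le> sym_offset n (Suc i)" by (rule sym_idx_le_offset[OF assms])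
  also have "\<dots> \<le> sym_offset n (Suc n)"
    using assms by (intro sym_offset_mono) (auto simp: sym_pairs_def)
  finally show ?thesis by (simp add: sym_offset_last sym_idx_eq_offset)
qed

lemma sym_idx_less:
  assumes "(i, j) \<in> sym_pairs n" "(i', j') \<in> sym_pairs n" "i < i'"
  shows "sym_idx n i j < sym_idx n i' j'"
proof -
  have "sym_idx n i j \<le> sym_offset n (Suc i)" by (rule sym_idx_le_offset[OF assms(1)])
  also have "\<dots> \<le> sym_offset n i'" using assms(3) by (intro sym_offset_mono) auto
  also have "\<dots> < sym_idx n i' j'" using assms(2) by (auto simp: sym_idx_eq_offset sym_pairs_def)
  finally show ?thesis .
qed

lemma inj_on_sym_idx: "inj_on (\<lambda>(i, j). sym_idx n i j) (sym_pairs n)"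
proof (rule inj_onI, clarify)
  fix i j i' j'
  assume p: "(i, j) \<in> sym_pairs n" "(i', j') \<in> sym_pairs n" and eq: "sym_idx n i j = sym_idx n i' j'"
  have "i = i'"
    using sym_idx_less[OF p(1) p(2)] sym_idx_less[OF p(2) p(1)] eq by (metis less_irrefl nat_neq_iff)
  then show "i = i' \<and> j = j'" using p eq by (auto simp: sym_idx_eq_offset sym_pairs_def)
qed

lemma bij_betw_sym_idx: "bij_betw (\<lambda>(i, j). sym_idx n i j) (sym_pairs n) {1..Mdim n}"
proof -
  let ?f = "\<lambda>(i, j). sym_idx n i j"
  have "?f ` sym_pairs n \<subseteq> {1..Mdim n}" using sym_idx_in_range by auto
  moreover have "card (?f ` sym_pairs n) = Mdim n"
    using card_image[OF inj_on_sym_idx] card_sym_pairs by simp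
  ultimately have "?f ` sym_pairs n = {1..Mdim n}" by (intro card_subset_eq) auto
  then show ?thesis using inj_on_sym_idx by (simp add: bij_betw_def)
qed

lemma sym_pair_sym_idx:
  assumes "(i, j) \<in> sym_pairs n" shows "sym_pair n (sym_idx n i j) = (i, j)"
proof -
  let ?P = "\<lambda>p. 1 \<le> fst p \<and> fst p \<le> snd p \<and> snd p \<le> n \<and> sym_idx n (fst p) (snd p) = sym_idx n i j"
  have "?P (i, j)" using assms by (auto simp: sym_pairs_def)
  then have P: "?P (sym_pair n (sym_idx n i j))" unfolding sym_pair_def by (rule someI)
  then have "sym_pair n (sym_idx n i j) \<in> sym_pairs n"
    by (cases "sym_pair n (sym_idx n i j)") (auto simp: sym_pairs_def)
  then show ?thesis using inj_on_sym_idx[of n] assms P unfolding inj_on_def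
    by (cases "sym_pair n (sym_idx n i j)") auto
qed

lemma sum_sym_pair: "(\<Sum>l=1..Mdim n. g (sym_pair n l)) = (\<Sum>p\<in>sym_pairs n. g p)"
proof -
  have "(\<Sum>l=1..Mdim n. g (sym_pair n l))
      = (\<Sum>p\<in>sym_pairs n. g (sym_pair n ((\<lambda>(i, j). sym_idx n i j) p)))"
    by (rule sum.reindex_bij_betw[OF bij_betw_sym_idx, symmetric])
  also have "\<dots> = (\<Sum>p\<in>sym_pairs n. g p)" by (rule sum.cong) (auto simp: sym_pair_sym_idx)
  finally show ?thesis .
qed

lemma sum_square_symmetric:
  fixes r :: "nat \<Rightarrow> nat \<Rightarrow> 'a::comm_semiring_1"
  assumes sym: "\<And>j k. r j k = r k j"
  shows "(\<Sum>j=1..n. \<Sum>k=1..n. r j k) = (\<Sum>j=1..n. \<Sum>k=j..n. if j < k then 2 * r j k else r j k)"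
proof (induction n)
  case 0
  then show ?case by simp
next
  case (Suc n)
  have "(\<Sum>j=1..Suc n. \<Sum>k=1..Suc n. r j k)
      = (\<Sum>j=1..n. \<Sum>k=1..n. r j k) + (\<Sum>k=1..n. r (Suc n) k) + (\<Sum>j=1..n. r j (Suc n))
        + r (Suc n) (Suc n)"
    by (simp add: sum.distrib sum.cl_ivl_Suc add_ac)
  also have "(\<Sum>k=1..n. r (Suc n) k) = (\<Sum>j=1..n. r j (Suc n))" by (intro sum.cong refl sym)
  finally have lhs: "(\<Sum>j=1..Suc n. \<Sum>k=1..Suc n. r j k)
      = (\<Sum>j=1..n. \<Sum>k=1..n. r j k) + 2 * (\<Sum>j=1..n. r j (Suc n)) + r (Suc n) (Suc n)"
    by (simp add: mult_2 add_ac)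
  have "(\<Sum>j=1..n. \<Sum>k=j..Suc n. if j < k then 2 * r j k else r j k)
      = (\<Sum>j=1..n. (\<Sum>k=j..n. if j < k then 2 * r j k else r j k) + 2 * r j (Suc n))"
    by (rule sum.cong) (auto simp: sum.cl_ivl_Suc)
  then have rhs: "(\<Sum>j=1..Suc n. \<Sum>k=j..Suc n. if j < k then 2 * r j k else r j k)
      = (\<Sum>j=1..n. \<Sum>k=j..n. if j < k then 2 * r j k else r j k) + 2 * (\<Sum>j=1..n. r j (Suc n))
        + r (Suc n) (Suc n)"
    by (simp add: sum.cl_ivl_Suc sum.distrib sum_distrib_left add_ac)
  show ?case using lhs rhs Suc by simp
qed

lemma vget_veronese:
  assumes "j \<in> {1..n}" "k \<in> {1..n}"
  shows "vget n (veronese n x) j k = (if j \<le> k then x j * cnj (x k) else x k * cnj (x j))"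
proof -
  have p: "(min j k, max j k) \<in> sym_pairs n" using assms by (auto simp: sym_pairs_def)
  show ?thesis unfolding vget_def veronese_def sym_idx_commute[of n j k]
    using sym_idx_in_range[OF p] sym_pair_sym_idx[OF p] by (auto simp: min_def max_def)
qed

lemma veronese_in_cvec: "veronese n x \<in> cvec (Mdim n)"
  by (simp add: cvec_def veronese_def)

lemma Re_avec_veronese_term:
  fixes q x :: "nat \<Rightarrow> complex"
  assumes "j \<le> k"
  shows "Re (cnj (if j < k then 2 * q j * cnj (q k) else complex_of_real ((cmod (q j))\<^sup>2))
             * (x j * cnj (x k)))
       = (if j < k then 2 * Re (cnj (q j) * x j * cnj (cnj (q k) * x k))
          else Re (cnj (q j) * x j * cnj (cnj (q k) * x k)))"
proof (cases "j < k")
  case True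
  then show ?thesis by (simp add: algebra_simps)
next
  case False
  with assms have "k = j" by simp
  moreover have "complex_of_real ((cmod (q j))\<^sup>2) = q j * cnj (q j)"
    by (rule complex_norm_square)
  ultimately show ?thesis by (simp add: algebra_simps)
qed

text \<open>The doubled off-diagonal entries of \<open>a\<^sub>i\<close> account for both \<open>(j,k)\<close> and \<open>(k,j)\<close>
  in the expansion of \<open>|q\<^sub>i\<^sup>H x|\<^sup>2\<close>.\<close>

lemma Re_Amul_veronese:
  "Re (Amul n q (veronese n x) i) = (cmod (\<Sum>j=1..n. cnj (q i j) * x j))\<^sup>2"
proof -
  define g where "g = (\<lambda>(j, k). cnj (if j < k then 2 * q i j * cnj (q i k)
      else complex_of_real ((cmod (q i j))\<^sup>2)) * (x j * cnj (x k)))"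
  define a where "a = (\<lambda>j. cnj (q i j) * x j)"
  have "Amul n q (veronese n x) i = (\<Sum>l=1..Mdim n. g (sym_pair n l))"
    unfolding Amul_def
    by (rule sum.cong) (auto simp: avec_def veronese_def g_def split: prod.splits)
  also have "\<dots> = (\<Sum>p\<in>sym_pairs n. g p)" by (rule sum_sym_pair)
  finally have "Re (Amul n q (veronese n x) i) = (\<Sum>j=1..n. \<Sum>k=j..n. Re (g (j, k)))"
    by (simp add: sym_pairs_eq_Sigma sum.Sigma)
  also have "\<dots> = (\<Sum>j=1..n. \<Sum>k=j..n.
      if j < k then 2 * Re (a j * cnj (a k)) else Re (a j * cnj (a k)))"
  proof (intro sum.cong refl)
    fix j k assume "k \<in> {j..n}"
    then show "Re (g (j, k)) = (if j < k then 2 * Re (a j * cnj (a k)) else Re (a j * cnj (a k)))"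
      unfolding g_def a_def using Re_avec_veronese_term[of j k "q i" x] by simp
  qed
  also have "\<dots> = (\<Sum>j=1..n. \<Sum>k=1..n. Re (a j * cnj (a k)))"
    by (rule sum_square_symmetric[symmetric]) (simp add: algebra_simps)
  also have "\<dots> = Re ((\<Sum>j=1..n. a j) * cnj (\<Sum>k=1..n. a k))"
    by (simp add: cnj_sum sum_product Re_sum)
  also have "\<dots> = (cmod (\<Sum>j=1..n. a j))\<^sup>2"
    by (metis complex_norm_square Re_complex_of_real)
  finally show ?thesis by (simp add: a_def)
qed

lemma CP0g_feasible_veronese:
  assumes "CP0_feasible n N q y x" shows "CP0g_feasible n N q y (veronese n x)"
proof -
  have "\<forall>j\<in>{1..n}. Im (vget n (veronese n x) j j) = 0 \<and> Re (vget n (veronese n x) j j) \<ge> 0"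
    by (simp add: vget_veronese flip: complex_norm_square)
  then show ?thesis
    using assms by (simp add: CP0g_feasible_def CP0_feasible_def veronese_in_cvec Re_Amul_veronese)
qed

lemma group_l0_veronese: "group_l0 n (veronese n x) = l0 n x"
proof -
  have "Wsel n j (veronese n x) \<noteq> (\<lambda>_. 0) \<longleftrightarrow> x j \<noteq> 0" if j: "j \<in> {1..n}" for j
  proof
    assume "Wsel n j (veronese n x) \<noteq> (\<lambda>_. 0)"
    then obtain k where "Wsel n j (veronese n x) k \<noteq> 0" by auto
    then show "x j \<noteq> 0" using j by (auto simp: Wsel_def vget_veronese split: if_splits)
  next
    assume "x j \<noteq> 0"
    then have "Wsel n j (veronese n x) j \<noteq> 0" using j by (simp add: Wsel_def vget_veronese)
    then show "Wsel n j (veronese n x) \<noteq> (\<lambda>_. 0)" by auto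
  qed
  then have "{j \<in> {1..n}. Wsel n j (veronese n x) \<noteq> (\<lambda>_. 0)} = {j \<in> {1..n}. x j \<noteq> 0}" by blast
  then show ?thesis by (simp add: group_l0_def l0_def)
qed

text \<open>Column \<open>i\<close> of \<open>\<nu>(x) = \<nu>(x')\<close> at a coordinate with \<open>x'\<^sub>i \<noteq> 0\<close> gives
  \<open>x\<^sub>j conj(x\<^sub>i) = x'\<^sub>j conj(x'\<^sub>i)\<close> for all \<open>j\<close>; the phase is \<open>x\<^sub>i / x'\<^sub>i\<close>.\<close>

lemma veronese_eq_imp_in_Tset:
  assumes x: "x \<in> cvec n" and x': "x' \<in> cvec n" and eq: "veronese n x = veronese n x'"
    and nz: "x' \<noteq> (\<lambda>_. 0)"
  shows "x \<in> Tset x'"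
proof -
  obtain i where i: "x' i \<noteq> 0" using nz by auto
  then have i_range: "i \<in> {1..n}" using x' by (auto simp: cvec_def)
  have col: "x j * cnj (x i) = x' j * cnj (x' i)" if j: "j \<in> {1..n}" for j
  proof -
    have "vget n (veronese n x) j i = vget n (veronese n x') j i" using eq by simp
    then show ?thesis using j i_range
      by (simp add: vget_veronese split: if_splits) (metis complex_cnj_cnj complex_cnj_mult mult.commute)
  qed
  have diag: "x i * cnj (x i) = x' i * cnj (x' i)" using col[OF i_range] .
  then have "(cmod (x i))\<^sup>2 = (cmod (x' i))\<^sup>2" by (metis complex_norm_square of_real_eq_iff)
  then have norm_eq: "cmod (x i) = cmod (x' i)" by (simp add: power2_eq_iff_nonneg)
  then have xi: "x i \<noteq> 0" using i by auto
  define z where "z = x i / x' i"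
  have "cmod z = 1" using norm_eq i by (simp add: z_def norm_divide)
  moreover have "x k = z * x' k" for k
  proof (cases "k \<in> {1..n}")
    case True
    have "x k * cnj (x i) * x' i = x' k * (x i * cnj (x i))"
      using col[OF True] diag by (simp add: algebra_simps)
    then have "x k * x' i = x' k * x i" using xi by (simp add: algebra_simps)
    then show ?thesis using i by (simp add: z_def field_simps)
  next
    case False
    then show ?thesis using x x' by (simp add: cvec_def)
  qed
  ultimately show ?thesis unfolding Tset_def by blast
qed

lemma inv_veronese_in_cvec: "inv_veronese n v \<in> cvec n"
  unfolding inv_veronese_def cvec_def by (auto simp: Let_def)

text \<open>\<open>\<nu>\<^sup>-\<^sup>1(v)\<close> is read off a column \<open>i\<close> of \<open>v\<close>, so each nonzero entry \<open>j\<close> of it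
  witnesses \<open>v\<^sub>j\<^sub>i \<noteq> 0\<close> and hence \<open>W\<^sub>j v \<noteq> 0\<close>.\<close>

lemma inv_veronese_column:
  assumes "inv_veronese n v \<noteq> (\<lambda>_. 0)"
  obtains i where "i \<in> {1..n}" "\<And>j. j \<in> {1..n} \<Longrightarrow> inv_veronese n v j \<noteq> 0 \<Longrightarrow> vget n v j i \<noteq> 0"
proof -
  have ex: "\<exists>j\<in>{1..n}. Re (vget n v j j) > 0 \<and> Im (vget n v j j) = 0"
    using assms unfolding inv_veronese_def by (auto split: if_splits)
  define i where "i = (LEAST j. 1 \<le> j \<and> j \<le> n \<and> Re (vget n v j j) > 0 \<and> Im (vget n v j j) = 0)"
  have "1 \<le> i \<and> i \<le> n"
    unfolding i_def by (rule LeastI2_ex) (use ex in auto)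
  moreover have "\<forall>j\<in>{1..n}. inv_veronese n v j \<noteq> 0 \<longrightarrow> vget n v j i \<noteq> 0"
    using ex unfolding inv_veronese_def Let_def i_def[symmetric] by auto
  ultimately show ?thesis using that by auto
qed

lemma l0_inv_veronese_le:
  assumes "inv_veronese n v \<noteq> (\<lambda>_. 0)"
  shows "l0 n (inv_veronese n v) \<le> group_l0 n v"
proof -
  obtain i where i: "i \<in> {1..n}"
    and col: "\<And>j. j \<in> {1..n} \<Longrightarrow> inv_veronese n v j \<noteq> 0 \<Longrightarrow> vget n v j i \<noteq> 0"
    using inv_veronese_column[OF assms] by blast
  have "{j \<in> {1..n}. inv_veronese n v j \<noteq> 0} \<subseteq> {j \<in> {1..n}. Wsel n j v \<noteq> (\<lambda>_. 0)}"
  proof clarify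
    fix j assume j: "j \<in> {1..n}" "inv_veronese n v j \<noteq> 0" and "Wsel n j v = (\<lambda>_. 0)"
    then have "Wsel n j v i = 0" by simp
    then show False using col j i by (simp add: Wsel_def)
  qed
  then show ?thesis unfolding l0_def group_l0_def by (intro card_mono) auto
qed

lemma CP0_feasible_rotate:
  assumes "CP0_feasible n N q y x" "cmod z = 1"
  shows "CP0_feasible n N q y (\<lambda>k. z * x k)"
proof -
  have "(\<Sum>j=1..n. cnj (q i j) * (z * x j)) = z * (\<Sum>j=1..n. cnj (q i j) * x j)" for i
    by (simp add: sum_distrib_left algebra_simps)
  then show ?thesis using assms by (simp add: CP0_feasible_def cvec_def norm_mult)
qed

lemma l0_rotate: "z \<noteq> 0 \<Longrightarrow> l0 n (\<lambda>k. z * x k) = l0 n x"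
  by (simp add: l0_def)

lemma group_l0_unique_sol_le_l0:
  assumes "CP0g_solset n N q y = {vs}" "CP0_feasible n N q y x"
  shows "group_l0 n vs \<le> l0 n x"
  using assms CP0g_feasible_veronese group_l0_veronese
  by (metis (no_types, lifting) CP0g_solset_def insertI1 mem_Collect_eq)

lemma veronese_eq_unique_sol:
  assumes sol: "CP0g_solset n N q y = {vs}"
    and x: "CP0_feasible n N q y x" "l0 n x \<le> group_l0 n vs"
  shows "veronese n x = vs"
proof -
  have "\<And>v'. CP0g_feasible n N q y v' \<Longrightarrow> group_l0 n vs \<le> group_l0 n v'"
    using sol by (auto simp: CP0g_solset_def)
  then have "veronese n x \<in> CP0g_solset n N q y"
    using CP0g_feasible_veronese[OF x(1)] group_l0_veronese[of n x] x(2)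
    by (auto simp: CP0g_solset_def intro: order_trans)
  then show ?thesis using sol by simp
qed

theorem theorem3:
  fixes n N :: nat and q :: "nat \<Rightarrow> nat \<Rightarrow> complex" and y :: "nat \<Rightarrow> real"
    and vs :: "nat \<Rightarrow> complex"
  assumes "n \<ge> 1" and "N \<ge> 1"
    and "CP0g_solset n N q y = {vs}"
    and "inv_veronese n vs \<noteq> (\<lambda>_. 0)"
    and "\<forall>i\<in>{1..N}. y i = (cmod (\<Sum>j=1..n. cnj (q i j) * inv_veronese n vs j))\<^sup>2"
  shows "CP0_solset n N q y = Tset (inv_veronese n vs)"
proof -
  define xs where "xs = inv_veronese n vs"
  have feas: "CP0_feasible n N q y xs"
    using assms(5) inv_veronese_in_cvec by (simp add: CP0_feasible_def xs_def)
  have opt: "l0 n xs = group_l0 n vs"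
    using l0_inv_veronese_le[OF assms(4)] group_l0_unique_sol_le_l0[OF assms(3) feas]
    by (simp add: xs_def)
  have ver: "veronese n xs = vs" using veronese_eq_unique_sol[OF assms(3) feas] opt by simp
  have "x \<in> CP0_solset n N q y \<longleftrightarrow> x \<in> Tset xs" for x
  proof
    assume "x \<in> CP0_solset n N q y"
    then have "CP0_feasible n N q y x" "l0 n x \<le> group_l0 n vs"
      using feas opt by (auto simp: CP0_solset_def)
    then show "x \<in> Tset xs"
      using veronese_eq_unique_sol[OF assms(3)] ver veronese_eq_imp_in_Tset assms(4) feas
      by (metis CP0_feasible_def xs_def)
  next
    assume "x \<in> Tset xs"
    then obtain z where "cmod z = 1" "x = (\<lambda>k. z * xs k)" by (auto simp: Tset_def)
    moreover have "z \<noteq> 0" using \<open>cmod z = 1\<close> by auto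
    ultimately show "x \<in> CP0_solset n N q y"
      using CP0_feasible_rotate[OF feas] l0_rotate[of z n xs] group_l0_unique_sol_le_l0[OF assms(3)] opt
      by (auto simp: CP0_solset_def)
  qed
  then show ?thesis by (auto simp: xs_def)
qed

end
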